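(* Let $M$ be a finite abelian group of order $m$ and $J$ a Jacobi function on $M$. Then there is a subset $S\subset\hat{M}$ and a function $i\colon S\to\hat{M}$ such that \[ J(\alpha,\beta)=\frac{1}{m}\sum_{x\in S}\alpha(i(x))\,\beta(i(x)x^{-1})\quad\text{for all }\alpha,\beta\in M. \] The set $S$ is closed under inversion, and $i(x)=x\,i(x^{-1})$ for all $x\in S$. Moreover, one of the following holds: (a) there is $c\in\hat{M}$ with $c^2=1$ such that $S=\hat{M}\setminus\{c\}$ and $i\colon\hat{M}\setminus\{c\}\to\hat{M}\setminus\{1\}$ is a bijection; or (b) $S=\hat{M}$ and $i\colon\hat{M}\to\hat{M}$ is a bijection.
   Context: $M$ is written multiplicatively with identity $1$; $\delta(\alpha)=1$ if $\alpha=1$ and $0$ otherwise. $\hat{M}$ is the Pontryagin dual of $M$, written multiplicatively; for $\alpha\in M$, $x\in\hat{M}$, $\alpha(x)$ denotes the value of the character $x$ at $\alpha$. A Jacobi function on $M$ is a function $J\colon M\times M\to\mathbf{C}$ satisfying: (A) $J(\alpha,\beta)=J(\beta,\alpha)$; (B) with $J^*(\alpha,\beta)=-\delta(\alpha)-\delta(\beta)+J(\alpha,\beta)$, $J^*(\alpha,\beta)J^*(\alpha\beta,\gamma)=J^*(\alpha,\beta\gamma)J^*(\beta,\gamma)$; (C) $\sum_{\beta\in M}J(\alpha_1\beta,\alpha_2\beta^{-1})J(\alpha_3\beta,\alpha_4\beta^{-1})=J(\alpha_1\alpha_4,\alpha_2\alpha_3)$; all for all elements of $M$. *)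

theory Defs
  imports "HOL-Algebra.Group" Complex_Main
begin

definition characters :: "('a, 'b) monoid_scheme \<Rightarrow> ('a \<Rightarrow> complex) set" where
  "characters G = {\<chi>. \<chi> \<in> extensional (carrier G)
      \<and> (\<forall>a\<in>carrier G. norm (\<chi> a) = 1)
      \<and> (\<forall>a\<in>carrier G. \<forall>b\<in>carrier G. \<chi> (a \<otimes>\<^bsub>G\<^esub> b) = \<chi> a * \<chi> b)}"

definition char_mult :: "('a, 'b) monoid_scheme \<Rightarrow> ('a \<Rightarrow> complex) \<Rightarrow> ('a \<Rightarrow> complex) \<Rightarrow> ('a \<Rightarrow> complex)" where
  "char_mult G x y = (\<lambda>a\<in>carrier G. x a * y a)"

definition char_one :: "('a, 'b) monoid_scheme \<Rightarrow> ('a \<Rightarrow> complex)" where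
  "char_one G = (\<lambda>a\<in>carrier G. 1)"

definition char_inv :: "('a, 'b) monoid_scheme \<Rightarrow> ('a \<Rightarrow> complex) \<Rightarrow> ('a \<Rightarrow> complex)" where
  "char_inv G x = (\<lambda>a\<in>carrier G. inverse (x a))"

definition kdelta :: "('a, 'b) monoid_scheme \<Rightarrow> 'a \<Rightarrow> complex" where
  "kdelta G a = (if a = \<one>\<^bsub>G\<^esub> then 1 else 0)"

definition jstar :: "('a, 'b) monoid_scheme \<Rightarrow> ('a \<Rightarrow> 'a \<Rightarrow> complex) \<Rightarrow> 'a \<Rightarrow> 'a \<Rightarrow> complex" where
  "jstar G J a b = - kdelta G a - kdelta G b + J a b"

definition jacobi_function :: "('a, 'b) monoid_scheme \<Rightarrow> ('a \<Rightarrow> 'a \<Rightarrow> complex) \<Rightarrow> bool" where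
  "jacobi_function G J \<longleftrightarrow>
     (\<forall>a\<in>carrier G. \<forall>b\<in>carrier G. J a b = J b a)
   \<and> (\<forall>a\<in>carrier G. \<forall>b\<in>carrier G. \<forall>c\<in>carrier G.
        jstar G J a b * jstar G J (a \<otimes>\<^bsub>G\<^esub> b) c = jstar G J a (b \<otimes>\<^bsub>G\<^esub> c) * jstar G J b c)
   \<and> (\<forall>a1\<in>carrier G. \<forall>a2\<in>carrier G. \<forall>a3\<in>carrier G. \<forall>a4\<in>carrier G.
        (\<Sum>b\<in>carrier G. J (a1 \<otimes>\<^bsub>G\<^esub> b) (a2 \<otimes>\<^bsub>G\<^esub> inv\<^bsub>G\<^esub> b)
                          * J (a3 \<otimes>\<^bsub>G\<^esub> b) (a4 \<otimes>\<^bsub>G\<^esub> inv\<^bsub>G\<^esub> b))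
        = J (a1 \<otimes>\<^bsub>G\<^esub> a4) (a2 \<otimes>\<^bsub>G\<^esub> a3))"

end

(*
  Expand J in the characters of M: J(a, b) = sum of Jhat(x, y) x(a) y(b) over pairs of characters.
  In these coordinates axiom (C) says that m [xz = yw] Jhat(x, y) Jhat(z, w) = [z = y, w = x] Jhat(x, y).
  Taking (z, w) = (y, x) shows Jhat takes only the values 0 and 1/m, and taking (z, w) = (y', x')
  shows that a pair (x, y) in the support of Jhat is determined by the ratio x/y. So S is the set of
  these ratios and i(x/y) = x; the symmetry (A) of J makes S closed under inversion.
  Axiom (B) at (1, 1, g) leaves only two possible values for J(1, g) when g <> 1, and one of them would
  force every character to be trivial at g. Hence T(g) = m J(g, 1) = sum of i(r)(g) over r in S
  equals |S| - m for g <> 1 and |S| for g = 1. Comparing the Fourier coefficients of T shows that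
  every nontrivial character has exactly one preimage under i and the trivial character has
  |S| + 1 - m.
  Characters extend from subgroups one generator at a time, so they separate points and there are
  exactly m of them.
*)

theory Submission
  imports Defs "HOL-Algebra.Multiplicative_Group"
begin

lemma complex_nth_root_exists:
  fixes c :: complex
  assumes "c \<noteq> 0" "0 < n"
  obtains w where "w ^ n = c"
proof -
  have "1 \<in> {z::complex. z ^ n = 1}" by simp
  then show ?thesis using bij_betw_imp_surj_on[OF bij_betw_nth_root_unity[OF assms]] that by blast
qed

lemma unit_sum_eq_card_imp_eq_1:
  fixes z :: "'i \<Rightarrow> complex"
  assumes "finite A" and norm: "\<And>i. i \<in> A \<Longrightarrow> norm (z i) = 1" and sum: "(\<Sum>i\<in>A. z i) = of_nat (card A)"
    and i: "i \<in> A"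
  shows "z i = 1"
proof -
  have Re_le: "Re (z j) \<le> 1" if "j \<in> A" for j
    using complex_Re_le_cmod[of "z j"] norm[OF that] by simp
  have "(\<Sum>j\<in>A. 1 - Re (z j)) = 0"
    using sum by (simp add: sum_subtractf flip: Re_sum)
  then have "Re (z i) = 1"
    using sum_nonneg_eq_0_iff[OF assms(1), of "\<lambda>j. 1 - Re (z j)"] Re_le i by simp
  moreover have "Re (z i) ^ 2 + Im (z i) ^ 2 = 1"
    using norm[OF i] cmod_power2[of "z i"] by simp
  ultimately show ?thesis by (simp add: complex_eq_iff)
qed

lemma bij_betw_if_card_fibres_eq_1:
  assumes "\<And>x. x \<in> A \<Longrightarrow> f x \<in> B" and "\<And>y. y \<in> B \<Longrightarrow> card {x \<in> A. f x = y} = 1"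
  shows "bij_betw f A B"
proof -
  have fibre: "\<exists>!x. x \<in> A \<and> f x = y" if "y \<in> B" for y
  proof -
    from assms(2)[OF that] obtain z where "{x \<in> A. f x = y} = {z}"
      by (rule card_1_singletonE)
    then show ?thesis by (intro ex1I[of _ z]) blast+
  qed
  show ?thesis
    unfolding bij_betw_def inj_on_def using assms(1) fibre by blast
qed

lemma sum_product_double_sums:
  fixes A C :: "_ \<Rightarrow> _ \<Rightarrow> 'c::comm_semiring_1"
  shows "(\<Sum>b\<in>B. (\<Sum>x\<in>X. \<Sum>y\<in>Y. A x y * r x y b) * (\<Sum>z\<in>Z. \<Sum>w\<in>W. C z w * s z w b))
       = (\<Sum>x\<in>X. \<Sum>y\<in>Y. \<Sum>z\<in>Z. \<Sum>w\<in>W. A x y * C z w * (\<Sum>b\<in>B. r x y b * s z w b))"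
proof -
  have "(\<Sum>b\<in>B. (\<Sum>x\<in>X. \<Sum>y\<in>Y. A x y * r x y b) * (\<Sum>z\<in>Z. \<Sum>w\<in>W. C z w * s z w b))
      = (\<Sum>b\<in>B. \<Sum>x\<in>X. \<Sum>y\<in>Y. \<Sum>z\<in>Z. \<Sum>w\<in>W. A x y * C z w * (r x y b * s z w b))"
    by (simp only: sum_distrib_right, simp only: sum_distrib_left, simp add: mult_ac)
  also have "\<dots> = (\<Sum>x\<in>X. \<Sum>y\<in>Y. \<Sum>z\<in>Z. \<Sum>w\<in>W. \<Sum>b\<in>B. A x y * C z w * (r x y b * s z w b))"
    by (simp only: sum.swap[of _ B])
  finally show ?thesis by (simp add: sum_distrib_left)
qed

section \<open>Characters\<close>

abbreviation char_div :: "('a, 'b) monoid_scheme \<Rightarrow> ('a \<Rightarrow> complex) \<Rightarrow> ('a \<Rightarrow> complex) \<Rightarrow> 'a \<Rightarrow> complex" where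
  "char_div G x y \<equiv> char_mult G x (char_inv G y)"

lemma char_mult_apply [simp]: "a \<in> carrier G \<Longrightarrow> char_mult G x y a = x a * y a"
  by (simp add: char_mult_def)

lemma char_inv_apply [simp]: "a \<in> carrier G \<Longrightarrow> char_inv G x a = inverse (x a)"
  by (simp add: char_inv_def)

lemma char_one_apply [simp]: "a \<in> carrier G \<Longrightarrow> char_one G a = 1"
  by (simp add: char_one_def)

lemma characters_eqI:
  "x \<in> characters G \<Longrightarrow> y \<in> characters G \<Longrightarrow> (\<And>a. a \<in> carrier G \<Longrightarrow> x a = y a) \<Longrightarrow> x = y"
  unfolding characters_def by (auto intro: extensionalityI)

lemma norm_char_apply: "x \<in> characters G \<Longrightarrow> a \<in> carrier G \<Longrightarrow> norm (x a) = 1"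
  unfolding characters_def by auto

lemma char_apply_nonzero: "x \<in> characters G \<Longrightarrow> a \<in> carrier G \<Longrightarrow> x a \<noteq> 0"
  using norm_char_apply by fastforce

lemma char_apply_mult:
  "x \<in> characters G \<Longrightarrow> a \<in> carrier G \<Longrightarrow> b \<in> carrier G \<Longrightarrow> x (a \<otimes>\<^bsub>G\<^esub> b) = x a * x b"
  unfolding characters_def by auto

context monoid
begin

lemma char_one_in_characters: "char_one G \<in> characters G"
  unfolding characters_def char_one_def by auto

lemma char_mult_in_characters:
  "x \<in> characters G \<Longrightarrow> y \<in> characters G \<Longrightarrow> char_mult G x y \<in> characters G"
  unfolding characters_def char_mult_def by (auto simp: norm_mult)

lemma char_inv_in_characters: "x \<in> characters G \<Longrightarrow> char_inv G x \<in> characters G"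
  unfolding characters_def char_inv_def by (auto simp: norm_inverse)

lemma char_div_in_characters: "x \<in> characters G \<Longrightarrow> y \<in> characters G \<Longrightarrow> char_div G x y \<in> characters G"
  by (simp add: char_mult_in_characters char_inv_in_characters)

lemma char_div_char_div:
  "x \<in> characters G \<Longrightarrow> y \<in> characters G \<Longrightarrow> char_div G x (char_div G x y) = y"
  by (rule characters_eqI[of _ G]) (simp_all add: char_div_in_characters char_apply_nonzero)

lemma char_inv_char_div:
  "x \<in> characters G \<Longrightarrow> y \<in> characters G \<Longrightarrow> char_inv G (char_div G x y) = char_div G y x"
  by (rule characters_eqI[of _ G]) (simp_all add: char_div_in_characters char_inv_in_characters)

lemma char_mult_char_div:
  "x \<in> characters G \<Longrightarrow> y \<in> characters G \<Longrightarrow> char_mult G y (char_div G x y) = x"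
  by (rule characters_eqI[of _ G])
    (simp_all add: char_div_in_characters char_mult_in_characters char_apply_nonzero)

lemma char_inv_char_inv: "x \<in> characters G \<Longrightarrow> char_inv G (char_inv G x) = x"
  by (rule characters_eqI[of _ G]) (simp_all add: char_inv_in_characters)

lemma char_div_self: "x \<in> characters G \<Longrightarrow> char_div G x x = char_one G"
  by (rule characters_eqI[of _ G])
    (simp_all add: char_div_in_characters char_one_in_characters char_apply_nonzero)

lemma submonoid_nat_pow_closed: "submonoid H G \<Longrightarrow> h \<in> H \<Longrightarrow> h [^] (n::nat) \<in> H"
  by (induction n) (auto simp: submonoid_def subsetD)

definition partial_character :: "'a set \<Rightarrow> ('a \<Rightarrow> complex) \<Rightarrow> bool" where
  "partial_character H \<chi> \<longleftrightarrow> (\<forall>a\<in>H. \<chi> a \<noteq> 0) \<and> (\<forall>a\<in>H. \<forall>b\<in>H. \<chi> (a \<otimes> b) = \<chi> a * \<chi> b)"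

lemma partial_character_one:
  assumes "partial_character H \<chi>" "\<one> \<in> H"
  shows "\<chi> \<one> = 1"
proof -
  have "\<chi> (\<one> \<otimes> \<one>) = \<chi> \<one> * \<chi> \<one>" "\<chi> \<one> \<noteq> 0"
    using assms unfolding partial_character_def by blast+
  then show ?thesis by simp
qed

lemma partial_character_pow:
  assumes "submonoid H G" "partial_character H \<chi>" "h \<in> H"
  shows "\<chi> (h [^] (n::nat)) = \<chi> h ^ n"
proof (induction n)
  case 0
  then show ?case using assms partial_character_one[OF assms(2) submonoid.one_closed[OF assms(1)]] by simp
next
  case (Suc n)
  have "h [^] n \<in> H" using assms submonoid_nat_pow_closed by blast
  then show ?case
    using Suc assms submonoid.subset by (auto simp: partial_character_def)
qed

lemma char_apply_one: "x \<in> characters G \<Longrightarrow> x \<one> = 1"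
  using char_apply_mult[of x G \<one> \<one>] char_apply_nonzero[of x G \<one>] by simp

lemma characters_partial_character: "x \<in> characters G \<Longrightarrow> partial_character (carrier G) x"
  unfolding partial_character_def by (simp add: char_apply_nonzero char_apply_mult)

lemma char_apply_pow: "x \<in> characters G \<Longrightarrow> a \<in> carrier G \<Longrightarrow> x (a [^] (n::nat)) = x a ^ n"
  using partial_character_pow[OF submonoid.intro characters_partial_character] by auto

definition adjoin :: "'a set \<Rightarrow> 'a \<Rightarrow> 'a set" where
  "adjoin H g = {h \<otimes> g [^] (j::nat) | h j. h \<in> H}"

lemma subset_adjoin: "H \<subseteq> carrier G \<Longrightarrow> H \<subseteq> adjoin H g"
  unfolding adjoin_def by (force intro: exI[of _ "0::nat"])

lemma in_adjoin: "\<one> \<in> H \<Longrightarrow> g \<in> carrier G \<Longrightarrow> g \<in> adjoin H g"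
  unfolding adjoin_def by (force intro: exI[of _ "1::nat"])

definition order_mod :: "'a set \<Rightarrow> 'a \<Rightarrow> nat" where
  "order_mod H g = (LEAST k. 0 < k \<and> g [^] k \<in> H)"

lemma pow_notin_below_order_mod: "0 < r \<Longrightarrow> r < order_mod H g \<Longrightarrow> g [^] r \<notin> H"
  unfolding order_mod_def using not_less_Least by blast

end

context group
begin

lemma char_apply_inv: "x \<in> characters G \<Longrightarrow> a \<in> carrier G \<Longrightarrow> x (inv a) = inverse (x a)"
  using char_apply_mult[of x G a "inv a"] char_apply_nonzero[of x G a] char_apply_one[of x]
  by (simp add: field_simps)

lemma finite_submonoid_is_subgroup:
  assumes "finite (carrier G)" "submonoid H G"
  shows "subgroup H G"
proof (rule submonoid_subgroupI[OF assms(2)])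
  fix h assume h: "h \<in> H"
  then have hG: "h \<in> carrier G" using assms(2) submonoid.subset by blast
  have "0 < order G"
    using assms(1) by (auto simp: order_def card_gt_0_iff)
  then have "h [^] (order G - 1) \<otimes> h = \<one>"
    using hG pow_order_eq_1 by (metis Suc_diff_1 nat_pow_Suc)
  then have "inv h = h [^] (order G - 1)"
    using hG by (simp add: inv_equality)
  then show "inv h \<in> H" by (simp add: submonoid_nat_pow_closed[OF assms(2) h])
qed

end

context comm_monoid
begin

lemma adjoin_mult:
  assumes "h1 \<in> carrier G" "h2 \<in> carrier G" "g \<in> carrier G"
  shows "(h1 \<otimes> g [^] (j1::nat)) \<otimes> (h2 \<otimes> g [^] (j2::nat)) = (h1 \<otimes> h2) \<otimes> g [^] (j1 + j2)"
  using assms by (simp add: m_ac nat_pow_mult)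

lemma submonoid_adjoin:
  assumes H: "submonoid H G" and g: "g \<in> carrier G"
  shows "submonoid (adjoin H g) G"
proof
  have HG: "H \<subseteq> carrier G" using H submonoid.subset by blast
  then show "adjoin H g \<subseteq> carrier G" using g by (auto simp: adjoin_def)
  show "\<one> \<in> adjoin H g" using H HG subset_adjoin submonoid.one_closed by blast
  fix x y assume "x \<in> adjoin H g" "y \<in> adjoin H g"
  then obtain h1 j1 h2 j2 where "x = h1 \<otimes> g [^] (j1::nat)" "y = h2 \<otimes> g [^] (j2::nat)" "h1 \<in> H" "h2 \<in> H"
    by (auto simp: adjoin_def)
  moreover have "h1 \<otimes> h2 \<in> H"
    using H \<open>h1 \<in> H\<close> \<open>h2 \<in> H\<close> by (rule submonoid.m_closed)
  ultimately show "x \<otimes> y \<in> adjoin H g"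
    using HG g adjoin_mult[of h1 h2 g j1 j2] unfolding adjoin_def by auto
qed

end

locale finite_comm_group = comm_group G for G (structure) +
  assumes finite_carrier: "finite (carrier G)"
begin

abbreviation dual :: "('a \<Rightarrow> complex) set" where
  "dual \<equiv> characters G"

lemma order_pos: "0 < order G"
  using finite_carrier one_closed by (auto simp: order_def card_gt_0_iff)

lemma subgroup_adjoin:
  assumes "subgroup H G" "g \<in> carrier G"
  shows "subgroup (adjoin H g) G"
  using finite_submonoid_is_subgroup[OF finite_carrier submonoid_adjoin]
    subgroup.subgroup_is_submonoid[OF assms(1)] assms(2) .

lemma
  assumes "subgroup H G" "g \<in> carrier G"
  shows order_mod_pos: "0 < order_mod H g" and pow_order_mod_mem: "g [^] order_mod H g \<in> H"
proof -
  have "0 < order G \<and> g [^] order G \<in> H"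
    using order_pos pow_order_eq_1 assms subgroup.one_closed by auto
  then show "0 < order_mod H g" "g [^] order_mod H g \<in> H"
    using LeastI[of "\<lambda>k. 0 < k \<and> g [^] k \<in> H"] unfolding order_mod_def by blast+
qed

lemma order_mod_dvd:
  assumes H: "subgroup H G" and g: "g \<in> carrier G" and d: "g [^] d \<in> H"
  shows "order_mod H g dvd d"
proof -
  interpret H: subgroup H G by (rule H)
  let ?k = "order_mod H g"
  have "g [^] d = (g [^] ?k) [^] (d div ?k) \<otimes> g [^] (d mod ?k)"
    using g by (simp add: nat_pow_pow nat_pow_mult)
  then have "g [^] (d mod ?k) = inv ((g [^] ?k) [^] (d div ?k)) \<otimes> g [^] d"
    using g by (subst inv_solve_left) auto
  moreover have "(g [^] ?k) [^] (d div ?k) \<in> H"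
    using submonoid_nat_pow_closed[OF H.subgroup_is_submonoid] pow_order_mod_mem[OF H g] .
  ultimately have "g [^] (d mod ?k) \<in> H" using d by simp
  then show ?thesis
    using pow_notin_below_order_mod[of "d mod ?k" H g] order_mod_pos[OF H g] by fastforce
qed

lemma partial_character_adjoin_welldefined:
  assumes H: "subgroup H G" and \<chi>: "partial_character H \<chi>" and g: "g \<in> carrier G"
    and w: "w ^ order_mod H g = \<chi> (g [^] order_mod H g)"
    and h: "h \<in> H" "h' \<in> H" and eq: "h \<otimes> g [^] j = h' \<otimes> g [^] j'" and le: "j' \<le> j"
  shows "\<chi> h * w ^ j = \<chi> h' * w ^ j'"
proof -
  interpret H: subgroup H G by (rule H)
  define d where "d = j - j'"
  have hG: "h \<in> carrier G" "h' \<in> carrier G" using h by auto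
  have "(h \<otimes> g [^] d) \<otimes> g [^] j' = h' \<otimes> g [^] j'"
    using eq le hG g by (simp add: d_def m_assoc nat_pow_mult)
  then have h': "h' = h \<otimes> g [^] d"
    using hG g by simp
  then have "g [^] d = inv h \<otimes> h'"
    using hG g by (subst inv_solve_left) auto
  then have "g [^] d \<in> H" using h by simp
  then obtain q where d: "d = order_mod H g * q" using order_mod_dvd[OF H g] by blast
  have "(g [^] order_mod H g) [^] q \<in> H"
    using submonoid_nat_pow_closed[OF H.subgroup_is_submonoid] pow_order_mod_mem[OF H g] .
  moreover have "h' = h \<otimes> (g [^] order_mod H g) [^] q"
    using h' d g by (simp add: nat_pow_pow)
  ultimately have "\<chi> h' = \<chi> h * \<chi> ((g [^] order_mod H g) [^] q)"
    using \<chi> h unfolding partial_character_def by simp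
  also have "\<dots> = \<chi> h * w ^ d"
    using partial_character_pow[OF H.subgroup_is_submonoid \<chi>] pow_order_mod_mem[OF H g] w d
    by (simp add: power_mult)
  finally show ?thesis using le by (simp add: d_def mult.assoc power_add[symmetric])
qed

lemma partial_character_extend_adjoin:
  assumes H: "subgroup H G" and \<chi>: "partial_character H \<chi>" and g: "g \<in> carrier G"
    and w: "w ^ order_mod H g = \<chi> (g [^] order_mod H g)"
  obtains \<chi>' where "partial_character (adjoin H g) \<chi>'" "\<And>h. h \<in> H \<Longrightarrow> \<chi>' h = \<chi> h" "\<chi>' g = w"
proof -
  interpret H: subgroup H G by (rule H)
  define \<chi>' where "\<chi>' y = (SOME z. \<exists>h\<in>H. \<exists>j. y = h \<otimes> g [^] (j::nat) \<and> z = \<chi> h * w ^ j)" for y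
  have \<chi>'_eq: "\<chi>' (h \<otimes> g [^] j) = \<chi> h * w ^ j" if "h \<in> H" for h j
  proof -
    have "(\<exists>h'\<in>H. \<exists>j'. h \<otimes> g [^] j = h' \<otimes> g [^] (j'::nat) \<and> z = \<chi> h' * w ^ j') \<longleftrightarrow> z = \<chi> h * w ^ j"
      for z
      using partial_character_adjoin_welldefined[OF H \<chi> g w] that nat_le_linear by metis
    then show ?thesis by (simp add: \<chi>'_def)
  qed
  have "w \<noteq> 0"
    using w order_mod_pos[OF H g] pow_order_mod_mem[OF H g] \<chi> by (auto simp: partial_character_def zero_power)
  then have "partial_character (adjoin H g) \<chi>'"
    using \<chi> g \<chi>'_eq unfolding partial_character_def adjoin_def
    by (auto simp: adjoin_mult power_add)
  moreover have "\<chi>' h = \<chi> h" if "h \<in> H" for h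
    using \<chi>'_eq[OF that, of 0] that by simp
  moreover have "\<chi>' g = w"
    using \<chi>'_eq[OF H.one_closed, of 1] partial_character_one[OF \<chi> H.one_closed] g by simp
  ultimately show ?thesis using that by blast
qed

lemma partial_character_carrier_restrict:
  assumes \<chi>: "partial_character (carrier G) \<chi>"
  shows "restrict \<chi> (carrier G) \<in> dual"
proof -
  have "norm (\<chi> a) = 1" if a: "a \<in> carrier G" for a
  proof -
    have "norm (\<chi> a) ^ order G = norm (\<chi> (a [^] order G))"
      using partial_character_pow[OF subgroup.subgroup_is_submonoid[OF subgroup_self] \<chi> a]
      by (simp add: norm_power)
    also have "\<dots> = 1 ^ order G"
      using pow_order_eq_1[OF a] partial_character_one[OF \<chi>] by simp
    finally show ?thesis
      using power_eq_iff_eq_base[OF order_pos] by (metis norm_ge_zero zero_le_one)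
  qed
  then show ?thesis
    using \<chi> unfolding characters_def partial_character_def by auto
qed

theorem partial_character_extends:
  assumes "subgroup H G" "partial_character H \<chi>"
  shows "\<exists>\<psi>\<in>dual. \<forall>h\<in>H. \<psi> h = \<chi> h"
  using assms
proof (induction "card (carrier G - H)" arbitrary: H \<chi> rule: less_induct)
  case less
  note H = less.prems(1) and \<chi> = less.prems(2)
  show ?case
  proof (cases "H = carrier G")
    case True
    then show ?thesis
      using partial_character_carrier_restrict \<chi> by (intro bexI[of _ "restrict \<chi> (carrier G)"]) auto
  next
    case False
    then obtain g where g: "g \<in> carrier G" "g \<notin> H" using subgroup.subset[OF H] by blast
    let ?k = "order_mod H g"
    have "\<chi> (g [^] ?k) \<noteq> 0"
      using pow_order_mod_mem[OF H g(1)] \<chi> by (simp add: partial_character_def)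
    then obtain w where "w ^ ?k = \<chi> (g [^] ?k)"
      using complex_nth_root_exists order_mod_pos[OF H g(1)] by metis
    then obtain \<chi>' where \<chi>': "partial_character (adjoin H g) \<chi>'" "\<And>h. h \<in> H \<Longrightarrow> \<chi>' h = \<chi> h"
      using partial_character_extend_adjoin[OF H \<chi> g(1)] by metis
    have H_sub: "H \<subseteq> adjoin H g"
      using subset_adjoin subgroup.subset[OF H] .
    moreover have "g \<in> adjoin H g"
      using in_adjoin subgroup.one_closed[OF H] g(1) .
    ultimately have "carrier G - adjoin H g \<subset> carrier G - H" using g by blast
    then have "card (carrier G - adjoin H g) < card (carrier G - H)"
      using finite_carrier by (simp add: psubset_card_mono)
    then obtain \<psi> where "\<psi> \<in> dual" "\<forall>h\<in>adjoin H g. \<psi> h = \<chi>' h"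
      using less.hyps subgroup_adjoin[OF H g(1)] \<chi>'(1) by blast
    then show ?thesis using \<chi>'(2) H_sub by (metis subsetD)
  qed
qed

lemma characters_separate:
  assumes a: "a \<in> carrier G" "a \<noteq> \<one>"
  obtains \<psi> where "\<psi> \<in> dual" "\<psi> a \<noteq> 1"
proof -
  let ?k = "order_mod {\<one>} a"
  have k: "0 < ?k" "a [^] ?k = \<one>"
    using order_mod_pos[OF triv_subgroup a(1)] pow_order_mod_mem[OF triv_subgroup a(1)] by auto
  have "\<not> {z::complex. z ^ ?k = 1} \<subseteq> {1}"
  proof
    assume "{z::complex. z ^ ?k = 1} \<subseteq> {1}"
    then have "card {z::complex. z ^ ?k = 1} \<le> card {1::complex}"
      by (intro card_mono) simp_all
    then have "?k \<le> 1" using card_roots_unity_eq[OF k(1)] by simp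
    moreover have "?k \<noteq> 1" using k(2) a by auto
    ultimately show False using k(1) by simp
  qed
  then obtain w :: complex where w: "w ^ ?k = 1" "w \<noteq> 1" by blast
  have "partial_character {\<one>} (\<lambda>_. 1)" by (simp add: partial_character_def)
  then obtain \<chi>' where \<chi>': "partial_character (adjoin {\<one>} a) \<chi>'" "\<chi>' a = w"
    using partial_character_extend_adjoin[OF triv_subgroup _ a(1)] w(1) k(2) by metis
  then obtain \<psi> where "\<psi> \<in> dual" "\<forall>h\<in>adjoin {\<one>} a. \<psi> h = \<chi>' h"
    using partial_character_extends[OF subgroup_adjoin[OF triv_subgroup a(1)]] by blast
  moreover have "a \<in> adjoin {\<one>} a" using in_adjoin a(1) by simp
  ultimately show ?thesis using that w(2) \<chi>'(2) by auto
qed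

lemma finite_dual: "finite dual"
proof -
  have "dual \<subseteq> PiE (carrier G) (\<lambda>_. {z. z ^ order G = 1})"
  proof
    fix x assume x: "x \<in> dual"
    have "x a ^ order G = 1" if "a \<in> carrier G" for a
      using char_apply_pow[OF x that, of "order G"] pow_order_eq_1[OF that] char_apply_one[OF x]
      by simp
    then show "x \<in> PiE (carrier G) (\<lambda>_. {z. z ^ order G = 1})"
      using x unfolding characters_def by (auto simp: PiE_def)
  qed
  moreover have "finite (PiE (carrier G) (\<lambda>_. {z::complex. z ^ order G = 1}))"
    using finite_carrier order_pos by (intro finite_PiE finite_roots_unity) simp_all
  ultimately show ?thesis by (rule finite_subset)
qed

lemma sum_character:
  assumes x: "x \<in> dual"
  shows "(\<Sum>a\<in>carrier G. x a) = (if x = char_one G then of_nat (order G) else 0)"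
proof (cases "x = char_one G")
  case True
  then show ?thesis by (simp add: order_def)
next
  case False
  then obtain b where b: "b \<in> carrier G" "x b \<noteq> 1"
    using characters_eqI[OF x char_one_in_characters] by auto
  have "(\<Sum>a\<in>carrier G. x a) = (\<Sum>a\<in>carrier G. x (b \<otimes> a))"
    using sum.reindex[OF inj_on_cmult[OF b(1)], of x] surj_const_mult[OF b(1)] by simp
  also have "\<dots> = x b * (\<Sum>a\<in>carrier G. x a)"
    using x b(1) by (simp add: char_apply_mult sum_distrib_left)
  finally have "(1 - x b) * (\<Sum>a\<in>carrier G. x a) = 0" by (simp add: algebra_simps)
  then show ?thesis using b(2) False by simp
qed

lemma characters_orthogonal:
  assumes "x \<in> dual" "y \<in> dual"
  shows "(\<Sum>a\<in>carrier G. x a * inverse (y a)) = (if x = y then of_nat (order G) else 0)"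
proof -
  have xy: "char_mult G x (char_inv G y) \<in> dual"
    using assms by (simp add: char_mult_in_characters char_inv_in_characters)
  have "char_mult G x (char_inv G y) = char_one G \<longleftrightarrow> (\<forall>a\<in>carrier G. x a * inverse (y a) = 1)"
  proof
    assume eq: "char_mult G x (char_inv G y) = char_one G"
    show "\<forall>a\<in>carrier G. x a * inverse (y a) = 1"
    proof
      fix a assume "a \<in> carrier G"
      then show "x a * inverse (y a) = 1" using fun_cong[OF eq, of a] by simp
    qed
  qed (auto intro: characters_eqI[OF xy char_one_in_characters])
  also have "\<dots> \<longleftrightarrow> (\<forall>a\<in>carrier G. x a = y a)"
    using char_apply_nonzero[OF assms(2)] by (simp add: field_simps)
  also have "\<dots> \<longleftrightarrow> x = y"
    using characters_eqI[OF assms] by auto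
  finally have "char_mult G x (char_inv G y) = char_one G \<longleftrightarrow> x = y" .
  then show ?thesis
    using sum_character[OF xy] by simp
qed

lemma bij_betw_char_mult: "\<psi> \<in> dual \<Longrightarrow> bij_betw (char_mult G \<psi>) dual dual"
  by (rule bij_betw_byWitness[where f' = "char_mult G (char_inv G \<psi>)"])
    (auto simp: char_apply_nonzero char_mult_in_characters char_inv_in_characters
      intro!: characters_eqI)

lemma sum_dual_values:
  assumes a: "a \<in> carrier G"
  shows "(\<Sum>x\<in>dual. x a) = (if a = \<one> then of_nat (card dual) else 0)"
proof (cases "a = \<one>")
  case True
  then show ?thesis by (simp add: char_apply_one)
next
  case False
  then obtain \<psi> where \<psi>: "\<psi> \<in> dual" "\<psi> a \<noteq> 1" using characters_separate a by blast
  have "(\<Sum>x\<in>dual. x a) = (\<Sum>x\<in>dual. char_mult G \<psi> x a)"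
    using sum.reindex_bij_betw[OF bij_betw_char_mult[OF \<psi>(1)], of "\<lambda>x. x a"] by simp
  also have "\<dots> = \<psi> a * (\<Sum>x\<in>dual. x a)" using a by (simp add: sum_distrib_left)
  finally have "(1 - \<psi> a) * (\<Sum>x\<in>dual. x a) = 0" by (simp add: algebra_simps)
  then show ?thesis using \<psi>(2) False by simp
qed

theorem card_dual: "card dual = order G"
proof -
  have "of_nat (card dual) = (\<Sum>a\<in>carrier G. \<Sum>x\<in>dual. x a)"
    using sum_dual_values finite_carrier by (simp add: sum.delta)
  also have "\<dots> = (\<Sum>x\<in>dual. \<Sum>a\<in>carrier G. x a)"
    by (rule sum.swap)
  also have "\<dots> = of_nat (order G)"
    using sum_character finite_dual char_one_in_characters by (simp add: sum.delta)
  finally show ?thesis by (simp only: of_nat_eq_iff)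
qed

lemma dual_orthogonal:
  assumes "a \<in> carrier G" "b \<in> carrier G"
  shows "(\<Sum>x\<in>dual. x a * inverse (x b)) = (if a = b then of_nat (order G) else 0)"
proof -
  have "(\<Sum>x\<in>dual. x a * inverse (x b)) = (\<Sum>x\<in>dual. x (a \<otimes> inv b))"
    using assms by (intro sum.cong) (auto simp: char_apply_mult char_apply_inv)
  moreover have "a \<otimes> inv b = \<one> \<longleftrightarrow> a = b"
    using assms by (metis inv_closed inv_equality r_inv inv_inv)
  ultimately show ?thesis using assms sum_dual_values card_dual by simp
qed

lemma sum_char_quot_product:
  assumes "x \<in> dual" "y \<in> dual" "z \<in> dual" "w \<in> dual"
  shows "(\<Sum>b\<in>carrier G. (x b * inverse (y b)) * (z b * inverse (w b)))
       = (if char_mult G x z = char_mult G y w then of_nat (order G) else 0)"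
proof -
  have "(\<Sum>b\<in>carrier G. (x b * inverse (y b)) * (z b * inverse (w b)))
      = (\<Sum>b\<in>carrier G. char_mult G x z b * inverse (char_mult G y w b))"
    by (intro sum.cong) (simp_all add: field_simps)
  then show ?thesis
    using characters_orthogonal[OF char_mult_in_characters char_mult_in_characters] assms by simp
qed

section \<open>Fourier expansion on a finite abelian group\<close>

definition fourier_coeff :: "('a \<Rightarrow> complex) \<Rightarrow> ('a \<Rightarrow> complex) \<Rightarrow> complex" where
  "fourier_coeff \<phi> x = (\<Sum>a\<in>carrier G. \<phi> a * inverse (x a)) / of_nat (order G)"

lemma fourier_expansion:
  assumes a: "a \<in> carrier G"
  shows "(\<Sum>x\<in>dual. fourier_coeff \<phi> x * x a) = \<phi> a"
proof -
  have "(\<Sum>x\<in>dual. fourier_coeff \<phi> x * x a)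
      = (\<Sum>b\<in>carrier G. \<phi> b * (\<Sum>x\<in>dual. x a * inverse (x b))) / of_nat (order G)"
    unfolding fourier_coeff_def
    by (simp add: sum_divide_distrib sum_distrib_left sum_distrib_right mult_ac sum.swap[of _ dual])
  also have "\<dots> = (\<Sum>b\<in>carrier G. \<phi> b * (if a = b then of_nat (order G) else 0)) / of_nat (order G)"
    using a by (simp add: dual_orthogonal)
  also have "\<dots> = \<phi> a"
    using a finite_carrier order_pos by (simp add: if_distrib sum.delta cong: if_cong)
  finally show ?thesis .
qed

lemma fourier_coeff_sum_characters:
  assumes x: "x \<in> dual"
  shows "fourier_coeff (\<lambda>a. \<Sum>y\<in>dual. c y * y a) x = c x"
proof -
  have "fourier_coeff (\<lambda>a. \<Sum>y\<in>dual. c y * y a) x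
      = (\<Sum>y\<in>dual. c y * (\<Sum>a\<in>carrier G. y a * inverse (x a))) / of_nat (order G)"
    unfolding fourier_coeff_def
    by (simp add: sum_distrib_left sum_distrib_right mult_ac sum.swap[of _ "carrier G"])
  also have "\<dots> = c x"
    using x finite_dual order_pos by (simp add: characters_orthogonal if_distrib sum.delta cong: if_cong)
  finally show ?thesis .
qed

lemma characters_coeffs_unique:
  assumes "\<And>a. a \<in> carrier G \<Longrightarrow> (\<Sum>y\<in>dual. c y * y a) = (\<Sum>y\<in>dual. d y * y a)" and "x \<in> dual"
  shows "c x = d x"
proof -
  have "fourier_coeff (\<lambda>a. \<Sum>y\<in>dual. c y * y a) x = fourier_coeff (\<lambda>a. \<Sum>y\<in>dual. d y * y a) x"
    using assms(1) unfolding fourier_coeff_def by (simp cong: sum.cong)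
  then show ?thesis using fourier_coeff_sum_characters[OF assms(2)] by simp
qed

definition fourier_coeff2 :: "('a \<Rightarrow> 'a \<Rightarrow> complex) \<Rightarrow> ('a \<Rightarrow> complex) \<Rightarrow> ('a \<Rightarrow> complex) \<Rightarrow> complex" where
  "fourier_coeff2 F x y = fourier_coeff (\<lambda>b. fourier_coeff (\<lambda>a. F a b) x) y"

lemma fourier_expansion2:
  assumes a: "a \<in> carrier G" and b: "b \<in> carrier G"
  shows "(\<Sum>x\<in>dual. \<Sum>y\<in>dual. fourier_coeff2 F x y * x a * y b) = F a b"
proof -
  have "(\<Sum>x\<in>dual. \<Sum>y\<in>dual. fourier_coeff2 F x y * x a * y b)
      = (\<Sum>x\<in>dual. (\<Sum>y\<in>dual. fourier_coeff2 F x y * y b) * x a)"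
    unfolding sum_distrib_right by (simp add: mult_ac)
  also have "\<dots> = (\<Sum>x\<in>dual. fourier_coeff (\<lambda>a. F a b) x * x a)"
    unfolding fourier_coeff2_def using fourier_expansion[OF b] by simp
  also have "\<dots> = F a b"
    using fourier_expansion[OF a] .
  finally show ?thesis .
qed

lemma fourier_coeff2_swap:
  assumes "\<And>a b. a \<in> carrier G \<Longrightarrow> b \<in> carrier G \<Longrightarrow> F a b = F b a"
  shows "fourier_coeff2 F x y = fourier_coeff2 F y x"
proof -
  have coeff: "fourier_coeff2 F x y
      = (\<Sum>b\<in>carrier G. \<Sum>a\<in>carrier G. F a b * inverse (x a) * inverse (y b)) / of_nat (order G) ^ 2"
    for x y
    unfolding fourier_coeff2_def fourier_coeff_def power2_eq_square
    by (simp add: sum_divide_distrib sum_distrib_right)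
  have "(\<Sum>b\<in>carrier G. \<Sum>a\<in>carrier G. F a b * inverse (x a) * inverse (y b))
      = (\<Sum>b\<in>carrier G. \<Sum>a\<in>carrier G. F b a * inverse (y b) * inverse (x a))"
    using assms by (intro sum.cong) (simp_all add: mult_ac)
  also have "\<dots> = (\<Sum>b\<in>carrier G. \<Sum>a\<in>carrier G. F a b * inverse (y a) * inverse (x b))"
    by (rule sum.swap)
  finally show ?thesis unfolding coeff by simp
qed

lemma characters_coeffs_unique4:
  assumes eq: "\<And>a1 a2 a3 a4. a1 \<in> carrier G \<Longrightarrow> a2 \<in> carrier G \<Longrightarrow> a3 \<in> carrier G \<Longrightarrow> a4 \<in> carrier G \<Longrightarrow>
      (\<Sum>x\<in>dual. \<Sum>y\<in>dual. \<Sum>z\<in>dual. \<Sum>w\<in>dual. c x y z w * (x a1 * y a2 * z a3 * w a4))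
    = (\<Sum>x\<in>dual. \<Sum>y\<in>dual. \<Sum>z\<in>dual. \<Sum>w\<in>dual. d x y z w * (x a1 * y a2 * z a3 * w a4))"
    and x: "x \<in> dual" and y: "y \<in> dual" and z: "z \<in> dual" and w: "w \<in> dual"
  shows "c x y z w = d x y z w"
proof -
  have nest: "(\<Sum>x\<in>dual. \<Sum>y\<in>dual. \<Sum>z\<in>dual. \<Sum>w\<in>dual. e x y z w * (x a1 * y a2 * z a3 * w a4))
    = (\<Sum>x\<in>dual. (\<Sum>y\<in>dual. (\<Sum>z\<in>dual. (\<Sum>w\<in>dual. e x y z w * w a4) * z a3) * y a2) * x a1)"
    for e :: "_ \<Rightarrow> _ \<Rightarrow> _ \<Rightarrow> _ \<Rightarrow> complex" and a1 a2 a3 a4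
    by (simp add: sum_distrib_left sum_distrib_right mult_ac)
  have 1: "(\<Sum>y\<in>dual. (\<Sum>z\<in>dual. (\<Sum>w\<in>dual. c x y z w * w a4) * z a3) * y a2)
         = (\<Sum>y\<in>dual. (\<Sum>z\<in>dual. (\<Sum>w\<in>dual. d x y z w * w a4) * z a3) * y a2)"
    if "x \<in> dual" "a2 \<in> carrier G" "a3 \<in> carrier G" "a4 \<in> carrier G" for x a2 a3 a4
    by (rule characters_coeffs_unique[OF _ that(1)], rule eq[unfolded nest]) (use that in auto)
  have 2: "(\<Sum>z\<in>dual. (\<Sum>w\<in>dual. c x y z w * w a4) * z a3)
         = (\<Sum>z\<in>dual. (\<Sum>w\<in>dual. d x y z w * w a4) * z a3)"
    if "x \<in> dual" "y \<in> dual" "a3 \<in> carrier G" "a4 \<in> carrier G" for x y a3 a4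
    by (rule characters_coeffs_unique[OF _ that(2)], rule 1) (use that in auto)
  have 3: "(\<Sum>w\<in>dual. c x y z w * w a4) = (\<Sum>w\<in>dual. d x y z w * w a4)"
    if "x \<in> dual" "y \<in> dual" "z \<in> dual" "a4 \<in> carrier G" for x y z a4
    by (rule characters_coeffs_unique[OF _ that(3)], rule 2) (use that in auto)
  show ?thesis
    by (rule characters_coeffs_unique[OF _ w], rule 3) (use x y z in auto)
qed

end

section \<open>Jacobi functions\<close>

locale jacobi = finite_comm_group G for G (structure) +
  fixes J :: "'a \<Rightarrow> 'a \<Rightarrow> complex"
  assumes jacobi: "jacobi_function G J"
begin

(* Jhat x y is the coefficient of x a * y b in J a b; the theorem's S and i come from its support. *)
abbreviation Jhat :: "('a \<Rightarrow> complex) \<Rightarrow> ('a \<Rightarrow> complex) \<Rightarrow> complex" where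
  "Jhat \<equiv> fourier_coeff2 J"

lemma J_sym: "a \<in> carrier G \<Longrightarrow> b \<in> carrier G \<Longrightarrow> J a b = J b a"
  using jacobi unfolding jacobi_function_def by blast

lemma J_cocycle:
  "a \<in> carrier G \<Longrightarrow> b \<in> carrier G \<Longrightarrow> c \<in> carrier G \<Longrightarrow>
    jstar G J a b * jstar G J (a \<otimes> b) c = jstar G J a (b \<otimes> c) * jstar G J b c"
  using jacobi unfolding jacobi_function_def by blast

lemma J_convolution:
  "a1 \<in> carrier G \<Longrightarrow> a2 \<in> carrier G \<Longrightarrow> a3 \<in> carrier G \<Longrightarrow> a4 \<in> carrier G \<Longrightarrow>
    (\<Sum>b\<in>carrier G. J (a1 \<otimes> b) (a2 \<otimes> inv b) * J (a3 \<otimes> b) (a4 \<otimes> inv b)) = J (a1 \<otimes> a4) (a2 \<otimes> a3)"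
  using jacobi unfolding jacobi_function_def by blast

lemma Jhat_sym: "Jhat x y = Jhat y x"
  using fourier_coeff2_swap J_sym by blast

lemma J_expansion:
  "a \<in> carrier G \<Longrightarrow> b \<in> carrier G \<Longrightarrow> J a b = (\<Sum>x\<in>dual. \<Sum>y\<in>dual. Jhat x y * x a * y b)"
  using fourier_expansion2 by simp

lemma J_shift_expansion:
  assumes "c \<in> carrier G" "d \<in> carrier G" "b \<in> carrier G"
  shows "J (c \<otimes> b) (d \<otimes> inv b)
       = (\<Sum>x\<in>dual. \<Sum>y\<in>dual. (Jhat x y * (x c * y d)) * (x b * inverse (y b)))"
proof -
  have "J (c \<otimes> b) (d \<otimes> inv b) = (\<Sum>x\<in>dual. \<Sum>y\<in>dual. Jhat x y * x (c \<otimes> b) * y (d \<otimes> inv b))"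
    using J_expansion assms by simp
  also have "\<dots> = (\<Sum>x\<in>dual. \<Sum>y\<in>dual. (Jhat x y * (x c * y d)) * (x b * inverse (y b)))"
    using assms by (intro sum.cong refl) (simp add: char_apply_mult char_apply_inv mult_ac)
  finally show ?thesis .
qed

lemma J_convolution_expansion:
  assumes "a1 \<in> carrier G" "a2 \<in> carrier G" "a3 \<in> carrier G" "a4 \<in> carrier G"
  shows "(\<Sum>b\<in>carrier G. J (a1 \<otimes> b) (a2 \<otimes> inv b) * J (a3 \<otimes> b) (a4 \<otimes> inv b))
       = (\<Sum>x\<in>dual. \<Sum>y\<in>dual. \<Sum>z\<in>dual. \<Sum>w\<in>dual.
           (if char_mult G x z = char_mult G y w then of_nat (order G) * (Jhat x y * Jhat z w) else 0)
           * (x a1 * y a2 * z a3 * w a4))"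
proof -
  have "(\<Sum>b\<in>carrier G. J (a1 \<otimes> b) (a2 \<otimes> inv b) * J (a3 \<otimes> b) (a4 \<otimes> inv b))
      = (\<Sum>b\<in>carrier G. (\<Sum>x\<in>dual. \<Sum>y\<in>dual. (Jhat x y * (x a1 * y a2)) * (x b * inverse (y b)))
                        * (\<Sum>z\<in>dual. \<Sum>w\<in>dual. (Jhat z w * (z a3 * w a4)) * (z b * inverse (w b))))"
    using assms by (simp add: J_shift_expansion)
  also have "\<dots> = (\<Sum>x\<in>dual. \<Sum>y\<in>dual. \<Sum>z\<in>dual. \<Sum>w\<in>dual.
      (Jhat x y * (x a1 * y a2)) * (Jhat z w * (z a3 * w a4))
      * (\<Sum>b\<in>carrier G. (x b * inverse (y b)) * (z b * inverse (w b))))"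
    by (rule sum_product_double_sums)
  also have "\<dots> = (\<Sum>x\<in>dual. \<Sum>y\<in>dual. \<Sum>z\<in>dual. \<Sum>w\<in>dual.
      (if char_mult G x z = char_mult G y w then of_nat (order G) * (Jhat x y * Jhat z w) else 0)
      * (x a1 * y a2 * z a3 * w a4))"
    using sum_char_quot_product by (intro sum.cong refl) (simp add: mult_ac)
  finally show ?thesis .
qed

lemma J_product_expansion:
  assumes "a1 \<in> carrier G" "a2 \<in> carrier G" "a3 \<in> carrier G" "a4 \<in> carrier G"
  shows "J (a1 \<otimes> a4) (a2 \<otimes> a3)
       = (\<Sum>x\<in>dual. \<Sum>y\<in>dual. \<Sum>z\<in>dual. \<Sum>w\<in>dual.
           (if z = y \<and> w = x then Jhat x y else 0) * (x a1 * y a2 * z a3 * w a4))"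
proof -
  have "(\<Sum>z\<in>dual. \<Sum>w\<in>dual. (if z = y \<and> w = x then Jhat x y else 0) * (x a1 * y a2 * z a3 * w a4))
      = Jhat x y * x (a1 \<otimes> a4) * y (a2 \<otimes> a3)" if "x \<in> dual" "y \<in> dual" for x y
  proof -
    have "(\<Sum>z\<in>dual. \<Sum>w\<in>dual. (if z = y \<and> w = x then Jhat x y else 0) * (x a1 * y a2 * z a3 * w a4))
        = (\<Sum>z\<in>dual. if z = y then \<Sum>w\<in>dual. if w = x then Jhat x y * (x a1 * y a2 * z a3 * w a4) else 0 else 0)"
      by (auto intro!: sum.cong)
    also have "\<dots> = Jhat x y * x (a1 \<otimes> a4) * y (a2 \<otimes> a3)"
      using that assms finite_dual by (simp add: char_apply_mult mult_ac)
    finally show ?thesis .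
  qed
  then show ?thesis
    using J_expansion[of "a1 \<otimes> a4" "a2 \<otimes> a3"] assms by simp
qed

lemma Jhat_convolution_identity:
  assumes "x \<in> dual" "y \<in> dual" "z \<in> dual" "w \<in> dual"
  shows "(if char_mult G x z = char_mult G y w then of_nat (order G) * (Jhat x y * Jhat z w) else 0)
       = (if z = y \<and> w = x then Jhat x y else 0)"
  by (rule characters_coeffs_unique4[OF _ assms])
    (simp only: J_convolution_expansion[symmetric] J_product_expansion[symmetric] J_convolution)

lemma Jhat_values:
  assumes "x \<in> dual" "y \<in> dual"
  shows "Jhat x y = 0 \<or> Jhat x y = 1 / of_nat (order G)"
proof -
  have "char_mult G x y = char_mult G y x"
    using assms by (intro characters_eqI[of _ G]) (simp_all add: char_mult_in_characters mult.commute)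
  then have "of_nat (order G) * (Jhat x y * Jhat x y) = Jhat x y"
    using Jhat_convolution_identity[OF assms assms(2,1)] Jhat_sym[of y x] by simp
  then have "Jhat x y * (of_nat (order G) * Jhat x y - 1) = 0"
    by (simp add: algebra_simps)
  then show ?thesis
    using order_pos by (auto simp: field_simps)
qed

lemma Jhat_support_unique:
  assumes xy: "x \<in> dual" "y \<in> dual" and xy': "x' \<in> dual" "y' \<in> dual"
    and nz: "Jhat x y \<noteq> 0" "Jhat x' y' \<noteq> 0"
    and quot: "char_div G x y = char_div G x' y'"
  shows "x = x' \<and> y = y'"
proof -
  have "x a * y' a = y a * x' a" if "a \<in> carrier G" for a
    using fun_cong[OF quot, of a] that char_apply_nonzero[OF xy(2) that] char_apply_nonzero[OF xy'(2) that]
    by (simp add: field_simps)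
  then have "char_mult G x y' = char_mult G y x'"
    using xy xy' by (intro characters_eqI[of _ G]) (simp_all add: char_mult_in_characters)
  then have "of_nat (order G) * (Jhat x y * Jhat y' x') = (if y' = y \<and> x' = x then Jhat x y else 0)"
    using Jhat_convolution_identity[OF xy xy'(2,1)] by simp
  moreover have "of_nat (order G) * (Jhat x y * Jhat y' x') \<noteq> 0"
    using nz order_pos Jhat_sym[of y' x'] by simp
  ultimately show ?thesis by (auto split: if_splits)
qed

definition Jhat_support :: "(('a \<Rightarrow> complex) \<times> ('a \<Rightarrow> complex)) set" where
  "Jhat_support = {(x, y) \<in> dual \<times> dual. Jhat x y \<noteq> 0}"

definition ratios :: "('a \<Rightarrow> complex) set" where
  "ratios = (\<lambda>(x, y). char_div G x y) ` Jhat_support"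

definition numerator :: "('a \<Rightarrow> complex) \<Rightarrow> 'a \<Rightarrow> complex" where
  "numerator r = fst (the_inv_into Jhat_support (\<lambda>(x, y). char_div G x y) r)"

lemma inj_on_quotient_Jhat_support: "inj_on (\<lambda>(x, y). char_div G x y) Jhat_support"
  using Jhat_support_unique by (auto simp: Jhat_support_def inj_on_def)

lemma Jhat_support_pair_of_ratio:
  assumes r: "r \<in> ratios"
  shows "the_inv_into Jhat_support (\<lambda>(x, y). char_div G x y) r = (numerator r, char_div G (numerator r) r)"
    and "(numerator r, char_div G (numerator r) r) \<in> Jhat_support"
proof -
  obtain x y where p: "the_inv_into Jhat_support (\<lambda>(x, y). char_div G x y) r = (x, y)"
    by fastforce
  have "(x, y) \<in> Jhat_support"
    using the_inv_into_into[OF inj_on_quotient_Jhat_support, of r Jhat_support] r p by (simp add: ratios_def)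
  moreover have "char_div G x y = r"
    using f_the_inv_into_f[OF inj_on_quotient_Jhat_support, of r] r p by (simp add: ratios_def)
  ultimately have "y = char_div G x r"
    using char_div_char_div by (auto simp: Jhat_support_def)
  then show "the_inv_into Jhat_support (\<lambda>(x, y). char_div G x y) r = (numerator r, char_div G (numerator r) r)"
    using p by (simp add: numerator_def)
  then show "(numerator r, char_div G (numerator r) r) \<in> Jhat_support"
    using \<open>(x, y) \<in> Jhat_support\<close> p by simp
qed

lemma ratios_subset: "ratios \<subseteq> dual"
  by (auto simp: ratios_def Jhat_support_def char_div_in_characters)

lemma finite_ratios: "finite ratios"
  using finite_subset[OF ratios_subset finite_dual] .

lemma numerator_in_dual: "r \<in> ratios \<Longrightarrow> numerator r \<in> dual"
  using Jhat_support_pair_of_ratio(2) by (auto simp: Jhat_support_def)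

lemma J_ratios_expansion:
  assumes a: "a \<in> carrier G" and b: "b \<in> carrier G"
  shows "J a b = (1 / of_nat (order G)) * (\<Sum>r\<in>ratios. numerator r a * char_div G (numerator r) r b)"
proof -
  have "J a b = (\<Sum>(x, y)\<in>dual \<times> dual. Jhat x y * x a * y b)"
    using J_expansion[OF a b] by (simp add: sum.cartesian_product)
  also have "\<dots> = (\<Sum>(x, y)\<in>Jhat_support. Jhat x y * x a * y b)"
    unfolding Jhat_support_def using finite_dual
    by (intro sum.mono_neutral_right) auto
  also have "\<dots> = (\<Sum>(x, y)\<in>Jhat_support. 1 / of_nat (order G) * (x a * y b))"
    using Jhat_values by (intro sum.cong refl) (force simp: Jhat_support_def)
  also have "\<dots> = (\<Sum>r\<in>ratios. 1 / of_nat (order G) * (numerator r a * char_div G (numerator r) r b))"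
    using sum.reindex_bij_betw[OF bij_betw_the_inv_into[OF inj_on_imp_bij_betw[OF inj_on_quotient_Jhat_support]],
        of "\<lambda>(x, y). 1 / of_nat (order G) * (x a * y b)"]
    by (simp add: Jhat_support_pair_of_ratio(1) ratios_def)
  finally show ?thesis by (simp add: sum_distrib_left)
qed

lemma ratios_inverse:
  assumes r: "r \<in> ratios"
  shows "char_inv G r \<in> ratios" and "numerator (char_inv G r) = char_div G (numerator r) r"
proof -
  let ?x = "numerator r" and ?y = "char_div G (numerator r) r"
  have xy: "(?x, ?y) \<in> Jhat_support" by (rule Jhat_support_pair_of_ratio(2)[OF r])
  then have yx: "(?y, ?x) \<in> Jhat_support" using Jhat_sym by (auto simp: Jhat_support_def)
  have x: "?x \<in> dual" and y: "?y \<in> dual" and "r \<in> dual"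
    using xy r ratios_subset by (auto simp: Jhat_support_def)
  then have "char_div G ?y ?x = char_inv G r"
    using char_inv_char_div[OF x y] char_div_char_div[OF x \<open>r \<in> dual\<close>] by simp
  then show inv: "char_inv G r \<in> ratios"
    using yx unfolding ratios_def by force
  have "the_inv_into Jhat_support (\<lambda>(x, y). char_div G x y) (char_inv G r) = (?y, ?x)"
    using the_inv_into_f_f[OF inj_on_quotient_Jhat_support yx] \<open>char_div G ?y ?x = char_inv G r\<close> by simp
  then show "numerator (char_inv G r) = ?y" by (simp add: numerator_def)
qed

lemma numerator_ratio_inverse:
  assumes "r \<in> ratios"
  shows "numerator r = char_mult G r (numerator (char_inv G r))"
  using char_mult_char_div[OF numerator_in_dual[OF assms]] ratios_subset assms
  by (simp add: ratios_inverse(2) subsetD)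

lemma J_one_cases:
  assumes g: "g \<in> carrier G" "g \<noteq> \<one>"
  shows "J \<one> g = 1 \<or> J \<one> g = J \<one> \<one> - 1"
proof -
  have "(J \<one> \<one> - 2) * (J \<one> g - 1) = (J \<one> g - 1) * (J \<one> g - 1)"
    using J_cocycle[of \<one> \<one> g] g by (simp add: jstar_def kdelta_def)
  then have "(J \<one> g - 1) * (J \<one> \<one> - 1 - J \<one> g) = 0"
    by (simp add: algebra_simps)
  then show ?thesis by auto
qed

definition numerator_sum :: "'a \<Rightarrow> complex" where
  "numerator_sum g = (\<Sum>r\<in>ratios. numerator r g)"

lemma numerator_sum_eq: "g \<in> carrier G \<Longrightarrow> numerator_sum g = of_nat (order G) * J g \<one>"
  using J_ratios_expansion[of g \<one>] order_pos numerator_in_dual ratios_subset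
  by (simp add: numerator_sum_def char_apply_one char_div_in_characters subsetD)

lemma numerator_sum_one: "numerator_sum \<one> = of_nat (card ratios)"
  using numerator_in_dual by (simp add: numerator_sum_def char_apply_one)

lemma card_ratios_le: "card ratios \<le> order G"
  using card_mono[OF finite_dual ratios_subset] card_dual by simp

lemma numerator_sum_neq_order:
  assumes g: "g \<in> carrier G" "g \<noteq> \<one>"
  shows "numerator_sum g \<noteq> of_nat (order G)"
proof
  assume sum: "numerator_sum g = of_nat (order G)"
  have "real (order G) \<le> (\<Sum>r\<in>ratios. norm (numerator r g))"
    using sum norm_sum[of "\<lambda>r. numerator r g" ratios] by (simp add: numerator_sum_def)
  also have "\<dots> = (\<Sum>r\<in>ratios. 1)"
    using g(1) by (intro sum.cong) (simp_all add: norm_char_apply[OF numerator_in_dual])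
  finally have card: "card ratios = order G" using card_ratios_le by simp
  then have all_dual: "ratios = dual"
    using card_subset_eq[OF finite_dual ratios_subset] card_dual by simp
  have one: "numerator r g = 1" if "r \<in> ratios" for r
    using unit_sum_eq_card_imp_eq_1[OF finite_ratios _ _ that, of "\<lambda>r. numerator r g"] g(1) sum card
    by (simp add: numerator_sum_def norm_char_apply[OF numerator_in_dual])
  obtain \<psi> where "\<psi> \<in> dual" "\<psi> g \<noteq> 1" using characters_separate g by blast
  moreover have "r g = 1" if "r \<in> dual" for r
    using fun_cong[OF numerator_ratio_inverse, of r g] one[of r] one[of "char_inv G r"]
      ratios_inverse(1)[of r] that all_dual g(1) by simp
  ultimately show False by blast
qed

lemma numerator_sum_off_one:
  assumes g: "g \<in> carrier G" "g \<noteq> \<one>"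
  shows "numerator_sum g = of_nat (card ratios) - of_nat (order G)"
proof -
  have "J \<one> g \<noteq> 1"
    using numerator_sum_neq_order[OF g] numerator_sum_eq[OF g(1)] J_sym[OF g(1) one_closed] by auto
  then have "J \<one> g = J \<one> \<one> - 1" using J_one_cases[OF g] by blast
  then have "numerator_sum g = of_nat (order G) * (J \<one> \<one> - 1)"
    using numerator_sum_eq[OF g(1)] J_sym[OF g(1) one_closed] by simp
  also have "\<dots> = of_nat (card ratios) - of_nat (order G)"
    using numerator_sum_eq[OF one_closed] numerator_sum_one by (simp add: algebra_simps)
  finally show ?thesis .
qed

lemma card_numerator_fibre:
  assumes u: "u \<in> dual"
  shows "of_nat (card {r \<in> ratios. numerator r = u})
       = 1 + (if u = char_one G then of_nat (card ratios) - of_nat (order G) else (0 :: complex))"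
  (is "_ = 1 + (if _ then ?s else _)")
proof (rule characters_coeffs_unique[OF _ u])
  fix g assume g: "g \<in> carrier G"
  have "(\<Sum>v\<in>dual. of_nat (card {r \<in> ratios. numerator r = v}) * v g) = numerator_sum g"
    unfolding numerator_sum_def
    using sum.group[OF finite_ratios finite_dual, of numerator "\<lambda>r. numerator r g"] numerator_in_dual
    by (simp add: image_subset_iff)
  also have "\<dots> = ?s + (\<Sum>v\<in>dual. v g)"
    using numerator_sum_off_one[OF g] numerator_sum_one sum_dual_values[OF g] card_dual
    by (cases "g = \<one>") simp_all
  also have "?s = (\<Sum>v\<in>dual. (if v = char_one G then ?s else 0) * v g)"
  proof -
    have "(\<Sum>v\<in>dual. (if v = char_one G then ?s else 0) * v g)
        = (\<Sum>v\<in>dual. if v = char_one G then ?s * v g else 0)"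
      by (intro sum.cong) simp_all
    then show ?thesis
      using finite_dual char_one_in_characters g by simp
  qed
  finally show "(\<Sum>v\<in>dual. of_nat (card {r \<in> ratios. numerator r = v}) * v g)
      = (\<Sum>v\<in>dual. (1 + (if v = char_one G then ?s else 0)) * v g)"
    by (simp add: distrib_right sum.distrib)
qed

lemma card_numerator_fibre_nontrivial:
  "u \<in> dual \<Longrightarrow> u \<noteq> char_one G \<Longrightarrow> card {r \<in> ratios. numerator r = u} = 1"
  using card_numerator_fibre[of u] by simp

lemma card_numerator_fibre_trivial:
  "card {r \<in> ratios. numerator r = char_one G} + order G = card ratios + 1"
proof -
  have "of_nat (card {r \<in> ratios. numerator r = char_one G} + order G) = (of_nat (card ratios + 1) :: complex)"
    using card_numerator_fibre[OF char_one_in_characters] by simp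
  then show ?thesis by (simp only: of_nat_eq_iff)
qed

lemma ratios_eq_dual:
  assumes "card ratios = order G"
  shows "ratios = dual" and "bij_betw numerator dual dual"
proof -
  show all: "ratios = dual"
    using card_subset_eq[OF finite_dual ratios_subset] assms card_dual by simp
  have "card {r \<in> ratios. numerator r = u} = 1" if "u \<in> dual" for u
    using card_numerator_fibre_nontrivial[OF that] card_numerator_fibre_trivial assms
    by (cases "u = char_one G") auto
  then show "bij_betw numerator dual dual"
    using bij_betw_if_card_fibres_eq_1[of dual numerator dual] numerator_in_dual all by auto
qed

lemma ratios_eq_dual_minus:
  assumes "card ratios \<noteq> order G"
  obtains c where "c \<in> dual" "char_mult G c c = char_one G" "ratios = dual - {c}"
    "bij_betw numerator (dual - {c}) (dual - {char_one G})"
proof -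
  have "card ratios < order G" using card_ratios_le assms by simp
  then have empty: "card {r \<in> ratios. numerator r = char_one G} = 0" and card: "card ratios + 1 = order G"
    using card_numerator_fibre_trivial by auto
  have "card (dual - ratios) = 1"
    using card_Diff_subset[OF finite_ratios ratios_subset] card_dual card by simp
  then obtain c where c: "dual - ratios = {c}" by (rule card_1_singletonE)
  then have c_dual: "c \<in> dual" and S: "ratios = dual - {c}" using ratios_subset by auto
  have "char_inv G c \<notin> ratios"
  proof
    assume "char_inv G c \<in> ratios"
    then have "char_inv G (char_inv G c) \<in> ratios" by (rule ratios_inverse(1))
    then show False using char_inv_char_inv[OF c_dual] S by simp
  qed
  then have "char_inv G c = c" using char_inv_in_characters[OF c_dual] S by auto
  then have "char_mult G c c = char_one G"
    using char_div_self[OF c_dual] by simp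
  moreover have "numerator r \<noteq> char_one G" if "r \<in> ratios" for r
    using empty finite_ratios that by auto
  then have "bij_betw numerator ratios (dual - {char_one G})"
    using card_numerator_fibre_nontrivial numerator_in_dual
    by (intro bij_betw_if_card_fibres_eq_1) auto
  ultimately show ?thesis using that c_dual S by simp
qed

end

theorem mainTheorem5:
  fixes G :: "('a, 'b) monoid_scheme" and J :: "'a \<Rightarrow> 'a \<Rightarrow> complex"
  assumes "comm_group G" and "finite (carrier G)" and "jacobi_function G J"
  shows "\<exists>S i. S \<subseteq> characters G
     \<and> (\<forall>x\<in>S. i x \<in> characters G)
     \<and> (\<forall>a\<in>carrier G. \<forall>b\<in>carrier G.
          J a b = (1 / of_nat (card (carrier G))) *
                  (\<Sum>x\<in>S. i x a * char_mult G (i x) (char_inv G x) b))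
     \<and> (\<forall>x\<in>S. char_inv G x \<in> S)
     \<and> (\<forall>x\<in>S. i x = char_mult G x (i (char_inv G x)))
     \<and> ((\<exists>c\<in>characters G. char_mult G c c = char_one G
            \<and> S = characters G - {c}
            \<and> bij_betw i (characters G - {c}) (characters G - {char_one G}))
        \<or> (S = characters G \<and> bij_betw i (characters G) (characters G)))"
proof -
  interpret jacobi G J
    using assms by (simp add: jacobi_def jacobi_axioms_def finite_comm_group_def finite_comm_group_axioms_def)
  show ?thesis
  proof (intro exI conjI)
    show "ratios \<subseteq> dual" by (rule ratios_subset)
    show "\<forall>r\<in>ratios. numerator r \<in> dual" using numerator_in_dual by blast
    show "\<forall>a\<in>carrier G. \<forall>b\<in>carrier G. J a b = 1 / of_nat (card (carrier G)) *
        (\<Sum>r\<in>ratios. numerator r a * char_div G (numerator r) r b)"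
      using J_ratios_expansion by (simp add: order_def)
    show "\<forall>r\<in>ratios. char_inv G r \<in> ratios" using ratios_inverse(1) by blast
    show "\<forall>r\<in>ratios. numerator r = char_mult G r (numerator (char_inv G r))"
      using numerator_ratio_inverse by blast
    show "(\<exists>c\<in>dual. char_mult G c c = char_one G \<and> ratios = dual - {c}
            \<and> bij_betw numerator (dual - {c}) (dual - {char_one G}))
        \<or> (ratios = dual \<and> bij_betw numerator dual dual)"
      using ratios_eq_dual ratios_eq_dual_minus by (cases "card ratios = order G") blast+
  qed
qed

end
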